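(* Let $W\ge1$ be an integer, let $\mathcal H$ be a real Hilbert space of dimension $d\in\{1,2,\ldots\}\cup\{\infty\}$ with $W<d$, and let $\Phi:\mathbb R^W\to\mathcal H$ be differentiable with Lipschitz-continuous differential. Then $\mathcal H\setminus F_\Phi$ is dense in $\mathcal H$.
   Context: For a target $\mathbf f\in\mathcal H$, let $L_{\mathbf f}(\mathbf w)=\frac12\|\mathbf f-\Phi(\mathbf w)\|^2_{\mathcal H}$ and let $\mathbf w(t)$, $t\ge0$, be the solution of the gradient flow $\frac{d\mathbf w}{dt}=-\nabla_{\mathbf w}L_{\mathbf f}(\mathbf w(t))$ with $\mathbf w(0)=\mathbf 0$. The set of GF-learnable targets is $F_\Phi=\{\mathbf f\in\mathcal H:\inf_{t\ge0}L_{\mathbf f}(\mathbf w(t))=0\}$. *)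

theory Defs
  imports "HOL-Analysis.Analysis"
begin

definition gf_loss :: "('w \<Rightarrow> 'h::real_normed_vector) \<Rightarrow> 'h \<Rightarrow> 'w \<Rightarrow> real" where
  "gf_loss Phi f w = (1/2) * (norm (f - Phi w))^2"

definition gf_solution ::
  "(real^'n \<Rightarrow> 'h::real_normed_vector) \<Rightarrow> 'h \<Rightarrow> (real \<Rightarrow> real^'n) \<Rightarrow> bool" where
  "gf_solution Phi f w \<longleftrightarrow> w 0 = 0 \<and>
     (\<forall>t\<ge>0. \<exists>g. (gf_loss Phi f has_derivative (\<lambda>v. g \<bullet> v)) (at (w t)) \<and>
                 (w has_vector_derivative (- g)) (at t within {0..}))"

definition gf_learnable :: "(real^'n \<Rightarrow> 'h::real_normed_vector) \<Rightarrow> 'h set" where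
  "gf_learnable Phi = {f. \<forall>w. gf_solution Phi f w \<longrightarrow> (INF t\<in>{0..}. gf_loss Phi f (w t)) = 0}"

end

(* Suppose a ball B(f0, eps) consisted of learnable targets. Since dim H > W, a linear slice
   y |-> f0 + E y of a small (W+1)-dimensional ball lies in it. The gradient flow from 0 stays in
   the ball of radius t/2 + L_f(0)/2 (its speed |grad L_f| is at most 1/2 + |grad L_f|^2/2, and the
   loss decreases at rate |grad L_f|^2), so it solves a globally Lipschitz ODE and depends
   continuously on the target; as inf_t L_f(w(t)) = 0 on the compact slice, one time T makes all
   residuals f - Phi(w(T)) uniformly small. Reading the slice back through a bounded left inverse Q
   of E, the map y |-> Q (Phi(w_y(T)) - f0) is uniformly close to the identity, so by Brouwer its
   image contains a ball of R^(W+1); but it factors through Phi on R^W, whose image is negligible. *)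

theory Submission
  imports Defs "HOL-Library.Cardinality"
begin

section \<open>Integral equations\<close>

lemma gronwall_exp:
  fixes D :: "real \<Rightarrow> real"
  assumes cont: "continuous_on {0..T} D" and K: "0 \<le> K"
    and le: "\<And>t. t \<in> {0..T} \<Longrightarrow> D t \<le> a + K * integral {0..t} D"
    and t: "t \<in> {0..T}"
  shows "D t \<le> a * exp (K * t)"
proof -
  define I where "I s = integral {0..s} D" for s
  have dI: "(I has_real_derivative D s) (at s within {0..T})" if "s \<in> {0..T}" for s
    unfolding I_def by (rule integral_has_real_derivative[OF cont that])
  have cI: "continuous_on {0..T} I"
    using dI by (meson DERIV_continuous continuous_on_eq_continuous_within)
  define J where "J s = exp (- (K * s)) * (a + K * I s)" for s
  have "J t \<le> J 0"
  proof (rule DERIV_nonpos_imp_decreasing_open[of 0 t J])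
    show "0 \<le> t" using t by auto
    show "continuous_on {0..t} J" unfolding J_def
      using t by (intro continuous_intros continuous_on_subset[OF cI]) auto
    fix s assume s: "0 < s" "s < t"
    then have sT: "s \<in> interior {0..T}" using t by auto
    have "(I has_real_derivative D s) (at s)"
      using dI[of s] sT at_within_interior[OF sT] s t by auto
    then have "(J has_real_derivative K * exp (- (K * s)) * (D s - (a + K * I s))) (at s)"
      unfolding J_def by (auto intro!: derivative_eq_intros simp: algebra_simps)
    moreover have "K * exp (- (K * s)) * (D s - (a + K * I s)) \<le> 0"
      using le[of s] s t K by (intro mult_nonneg_nonpos) (auto simp: I_def)
    ultimately show "\<exists>y. (J has_real_derivative y) (at s) \<and> y \<le> 0" by auto
  qed
  then have "a + K * I t \<le> a * exp (K * t)"
    by (simp add: J_def I_def exp_minus field_simps)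
  then show ?thesis using le[OF t] by (simp add: I_def)
qed

lemma integral_equation_solutions_dist:
  fixes G1 G2 :: "'a::euclidean_space \<Rightarrow> 'a" and X1 X2 :: "real \<Rightarrow> 'a"
  assumes c1: "continuous_on {0..T} X1" and c2: "continuous_on {0..T} X2"
    and gc1: "continuous_on UNIV G1" and gc2: "continuous_on UNIV G2"
    and e1: "\<And>t. t \<in> {0..T} \<Longrightarrow> X1 t = integral {0..t} (\<lambda>s. G1 (X1 s))"
    and e2: "\<And>t. t \<in> {0..T} \<Longrightarrow> X2 t = integral {0..t} (\<lambda>s. G2 (X2 s))"
    and lip: "\<And>x y. norm (G1 x - G1 y) \<le> K * norm (x - y)" and K: "0 \<le> K"
    and eta: "\<And>x. norm (G1 x - G2 x) \<le> \<eta>"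
    and t: "t \<in> {0..T}"
  shows "norm (X1 t - X2 t) \<le> \<eta> * T * exp (K * t)"
proof -
  define D where "D s = norm (X1 s - X2 s)" for s
  have eta0: "0 \<le> \<eta>" using eta[of 0] norm_ge_zero order_trans by blast
  have cD: "continuous_on {0..T} D" unfolding D_def by (intro continuous_intros c1 c2)
  have "D t \<le> (\<eta> * T) * exp (K * t)"
  proof (rule gronwall_exp[OF cD K _ t])
    fix s assume s: "s \<in> {0..T}"
    have sub: "{0..s} \<subseteq> {0..T}" using s by auto
    have i1: "(\<lambda>u. G1 (X1 u)) integrable_on {0..s}"
      by (rule integrable_continuous_real, rule continuous_on_compose2[OF gc1 continuous_on_subset[OF c1 sub]]) auto
    have i2: "(\<lambda>u. G2 (X2 u)) integrable_on {0..s}"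
      by (rule integrable_continuous_real, rule continuous_on_compose2[OF gc2 continuous_on_subset[OF c2 sub]]) auto
    have iD: "D integrable_on {0..s}" by (rule integrable_continuous_real[OF continuous_on_subset[OF cD sub]])
    have "D s = norm (integral {0..s} (\<lambda>u. G1 (X1 u) - G2 (X2 u)))"
      unfolding D_def using e1[OF s] e2[OF s] integral_diff[OF i1 i2] by simp
    also have "\<dots> \<le> integral {0..s} (\<lambda>u. K * D u + \<eta>)"
    proof (rule integral_norm_bound_integral)
      show "(\<lambda>u. G1 (X1 u) - G2 (X2 u)) integrable_on {0..s}" using i1 i2 by (rule integrable_diff)
      show "(\<lambda>u. K * D u + \<eta>) integrable_on {0..s}"
        by (intro integrable_add integrable_const_ivl integrable_on_mult_right[OF iD])
      fix u
      have "norm (G1 (X1 u) - G2 (X2 u)) \<le> norm (G1 (X1 u) - G1 (X2 u)) + norm (G1 (X2 u) - G2 (X2 u))"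
        using norm_triangle_ineq[of "G1 (X1 u) - G1 (X2 u)" "G1 (X2 u) - G2 (X2 u)"] by simp
      also have "\<dots> \<le> K * D u + \<eta>" unfolding D_def by (intro add_mono lip eta)
      finally show "norm (G1 (X1 u) - G2 (X2 u)) \<le> K * D u + \<eta>" .
    qed
    also have "\<dots> = K * integral {0..s} D + \<eta> * s"
      using s by (simp add: integral_add[OF integrable_on_mult_right[OF iD] integrable_const_ivl])
    also have "\<dots> \<le> \<eta> * T + K * integral {0..s} D"
      using s eta0 mult_left_mono[of s T \<eta>] by simp
    finally show "D s \<le> \<eta> * T + K * integral {0..s} D" .
  qed
  then show ?thesis by (simp add: D_def)
qed

lemma integral_has_vector_derivative_Ici:
  fixes h :: "real \<Rightarrow> 'a::banach"
  assumes "continuous_on {0..} h" "0 \<le> t"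
  shows "((\<lambda>u. integral {0..u} h) has_vector_derivative h t) (at t within {0..})"
proof -
  have "((\<lambda>u. integral {0..u} h) has_vector_derivative h t) (at t within {0..t+1})"
    by (rule integral_has_vector_derivative) (use assms in \<open>auto intro: continuous_on_subset\<close>)
  moreover have "at t within {0..t+1} = at t within {0..}"
    by (rule at_within_nhd[of _ "{..<t+1}"]) (use assms in auto)
  ultimately show ?thesis by simp
qed

lemma continuous_on_integral_Ici:
  fixes h :: "real \<Rightarrow> 'a::banach"
  assumes "continuous_on {0..} h"
  shows "continuous_on {0..} (\<lambda>u. integral {0..u} h)"
  unfolding continuous_on_eq_continuous_within
  using has_vector_derivative_continuous[OF integral_has_vector_derivative_Ici[OF assms]] by auto

lemma lipschitz_on_integral_Ici:
  fixes h :: "real \<Rightarrow> 'a::euclidean_space"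
  assumes int: "\<And>t. 0 \<le> t \<Longrightarrow> h integrable_on {0..t}" and bound: "\<And>s. norm (h s) \<le> M"
  shows "M-lipschitz_on {0..} (\<lambda>t. integral {0..t} h)"
proof -
  have M: "0 \<le> M" using bound[of 0] norm_ge_zero order_trans by blast
  have le: "dist (integral {0..t} h) (integral {0..s} h) \<le> M * dist t s" if st: "0 \<le> s" "s \<le> t" for s t
  proof -
    have "integral {0..t} h - integral {0..s} h = integral {s..t} h"
      using Henstock_Kurzweil_Integration.integral_combine[OF st int] st by (simp add: algebra_simps)
    also have "norm \<dots> \<le> integral {s..t} (\<lambda>u. M)"
      by (rule integral_norm_bound_integral)
        (use st in \<open>auto intro: bound integrable_subinterval_real[OF int[of t]]\<close>)
    finally show ?thesis using st by (simp add: dist_norm dist_real_def mult.commute)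
  qed
  show ?thesis
  proof (rule lipschitz_onI[OF _ M])
    fix s t :: real assume "s \<in> {0..}" "t \<in> {0..}"
    then show "dist (integral {0..s} h) (integral {0..t} h) \<le> M * dist s t"
      using le[of s t] le[of t s] by (cases "s \<le> t") (auto simp: dist_commute)
  qed
qed

lemma has_integral_power_0:
  assumes "0 \<le> t"
  shows "((\<lambda>s::real. s ^ k) has_integral t ^ Suc k / Suc k) {0..t}"
proof -
  have "((\<lambda>s::real. s ^ k) has_integral t ^ Suc k / Suc k - 0 ^ Suc k / Suc k) {0..t}"
  proof (rule fundamental_theorem_of_calculus[OF assms])
    fix s :: real assume "s \<in> {0..t}"
    show "((\<lambda>s. s ^ Suc k / real (Suc k)) has_vector_derivative s ^ k) (at s within {0..t})"
      unfolding has_real_derivative_iff_has_vector_derivative[symmetric]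
      by (rule DERIV_cdivide[OF DERIV_pow, THEN DERIV_cong]) (simp del: of_nat_Suc)
  qed
  then show ?thesis by simp
qed

lemma continuous_on_norm_lipschitz:
  fixes G :: "'a::real_normed_vector \<Rightarrow> 'b::real_normed_vector"
  assumes "\<And>x y. norm (G x - G y) \<le> K * norm (x - y)" "0 \<le> K"
  shows "continuous_on UNIV G"
  by (rule lipschitz_on_continuous_on[of K], rule lipschitz_onI) (use assms in \<open>auto simp: dist_norm\<close>)

fun picard_iter :: "('a::euclidean_space \<Rightarrow> 'a) \<Rightarrow> nat \<Rightarrow> real \<Rightarrow> 'a" where
  "picard_iter G 0 = (\<lambda>t. 0)"
| "picard_iter G (Suc n) = (\<lambda>t. integral {0..t} (\<lambda>s. G (picard_iter G n s)))"

context
  fixes G :: "'a::euclidean_space \<Rightarrow> 'a" and K M :: real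
  assumes G_lipschitz: "\<And>x y. norm (G x - G y) \<le> K * norm (x - y)" and K_nonneg: "0 \<le> K"
    and G_bounded: "\<And>x. norm (G x) \<le> M"
begin

lemma continuous_on_picard_iter: "continuous_on {0..} (picard_iter G n)"
proof (induction n)
  case (Suc n)
  have "continuous_on {0..} (\<lambda>s. G (picard_iter G n s))"
    by (rule continuous_on_compose2[OF continuous_on_norm_lipschitz[OF G_lipschitz K_nonneg] Suc]) auto
  then show ?case by (simp add: continuous_on_integral_Ici)
qed simp

lemma integrable_picard_iter: "(\<lambda>s. G (picard_iter G n s)) integrable_on {0..t}"
  by (rule integrable_continuous_real, rule continuous_on_compose2[OF
        continuous_on_norm_lipschitz[OF G_lipschitz K_nonneg]
        continuous_on_subset[OF continuous_on_picard_iter]]) auto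

lemma picard_iter_step_bound:
  assumes "0 \<le> t"
  shows "norm (picard_iter G (Suc n) t - picard_iter G n t) \<le> M * K ^ n * t ^ Suc n / fact (Suc n)"
  using assms
proof (induction n arbitrary: t)
  case 0
  have "norm (integral {0..t} (\<lambda>s. G 0)) \<le> integral {0..t} (\<lambda>s. M)"
    by (rule integral_norm_bound_integral) (auto intro: G_bounded)
  then show ?case using 0 by (simp add: mult.commute)
next
  case (Suc n)
  define c where "c = K * (M * K ^ n / fact (Suc n))"
  have pow: "((\<lambda>s. c * s ^ Suc n) has_integral c * (t ^ Suc (Suc n) / Suc (Suc n))) {0..t}"
    by (rule has_integral_mult_right[OF has_integral_power_0[OF Suc.prems]])
  have "norm (picard_iter G (Suc (Suc n)) t - picard_iter G (Suc n) t)
      = norm (integral {0..t} (\<lambda>s. G (picard_iter G (Suc n) s) - G (picard_iter G n s)))"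
    unfolding picard_iter.simps(2)[of G "Suc n"] picard_iter.simps(2)[of G n, THEN fun_cong, of t]
    by (simp only: integral_diff[OF integrable_picard_iter integrable_picard_iter])
  also have "\<dots> \<le> integral {0..t} (\<lambda>s. c * s ^ Suc n)"
  proof (rule integral_norm_bound_integral)
    show "(\<lambda>s. G (picard_iter G (Suc n) s) - G (picard_iter G n s)) integrable_on {0..t}"
      by (intro integrable_diff integrable_picard_iter)
    show "(\<lambda>s. c * s ^ Suc n) integrable_on {0..t}" using pow by blast
    fix s assume s: "s \<in> {0..t}"
    have "norm (G (picard_iter G (Suc n) s) - G (picard_iter G n s))
        \<le> K * norm (picard_iter G (Suc n) s - picard_iter G n s)" by (rule G_lipschitz)
    also have "\<dots> \<le> K * (M * K ^ n * s ^ Suc n / fact (Suc n))"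
      using Suc.IH[of s] s K_nonneg by (intro mult_left_mono) auto
    finally show "norm (G (picard_iter G (Suc n) s) - G (picard_iter G n s)) \<le> c * s ^ Suc n"
      by (simp add: c_def)
  qed
  also have "\<dots> = c * (t ^ Suc (Suc n) / Suc (Suc n))"
    using pow by (rule integral_unique)
  also have "\<dots> = M * K ^ Suc n * t ^ Suc (Suc n) / fact (Suc (Suc n))"
    by (simp add: c_def field_simps del: of_nat_Suc)
  finally show ?case .
qed

text \<open>The step bounds are dominated by the exponential series of \<open>K t\<close>.\<close>

lemma summable_picard_iter_steps:
  assumes t: "0 \<le> t"
  shows "summable (\<lambda>n. picard_iter G (Suc n) t - picard_iter G n t)"
proof (rule summable_norm_cancel, rule summable_comparison_test)
  show "summable (\<lambda>n. M * t * (inverse (fact n) * (K * t) ^ n))"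
    by (intro summable_mult summable_exp)
  have M: "0 \<le> M" using G_bounded[of 0] norm_ge_zero order_trans by blast
  have "norm (picard_iter G (Suc n) t - picard_iter G n t) \<le> M * t * (inverse (fact n) * (K * t) ^ n)" for n
  proof -
    have "norm (picard_iter G (Suc n) t - picard_iter G n t) \<le> M * K ^ n * t ^ Suc n / fact (Suc n)"
      by (rule picard_iter_step_bound[OF t])
    also have "\<dots> \<le> M * K ^ n * t ^ Suc n / fact n"
      using t M K_nonneg by (intro divide_left_mono) (auto simp: fact_mono)
    finally show ?thesis by (simp add: field_simps power_mult_distrib)
  qed
  then show "\<exists>N. \<forall>n\<ge>N. norm (norm (picard_iter G (Suc n) t - picard_iter G n t))
      \<le> M * t * (inverse (fact n) * (K * t) ^ n)" by auto
qed

lemma picard_iter_convergent: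
  assumes "0 \<le> t"
  shows "convergent (\<lambda>n. picard_iter G n t)"
proof -
  have "(\<lambda>n. \<Sum>i<n. picard_iter G (Suc i) t - picard_iter G i t) = (\<lambda>n. picard_iter G n t)"
    using sum_lessThan_telescope[of "\<lambda>i. picard_iter G i t"] by simp
  then show ?thesis
    using summable_picard_iter_steps[OF assms] by (metis summable_iff_convergent)
qed

lemma integral_equation_solution_exists:
  "\<exists>X::real \<Rightarrow> 'a. X 0 = 0 \<and> continuous_on {0..} X \<and> (\<forall>t\<ge>0. X t = integral {0..t} (\<lambda>s. G (X s)))"
proof -
  define X where "X t = lim (\<lambda>n. picard_iter G n t)" for t
  have conv: "(\<lambda>n. picard_iter G n t) \<longlonglongrightarrow> X t" if "0 \<le> t" for t
    unfolding X_def using picard_iter_convergent[OF that] by (rule convergent_LIMSEQ_iff[THEN iffD1])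
  have sol: "X t = integral {0..t} (\<lambda>s. G (X s)) \<and> (\<lambda>s. G (X s)) integrable_on {0..t}" if t: "0 \<le> t" for t
  proof -
    have lim: "(\<lambda>k. G (picard_iter G k s)) \<longlonglongrightarrow> G (X s)" if "s \<in> {0..t}" for s
      using that by (intro continuous_on_tendsto_compose[OF
          continuous_on_norm_lipschitz[OF G_lipschitz K_nonneg] conv]) auto
    note dc = dominated_convergence[of "\<lambda>k s. G (picard_iter G k s)" "{0..t}" "\<lambda>s. M",
        OF integrable_picard_iter integrable_const_ivl G_bounded lim]
    have "(\<lambda>k. picard_iter G (Suc k) t) \<longlonglongrightarrow> integral {0..t} (\<lambda>s. G (X s))" using dc(2) by simp
    moreover have "(\<lambda>k. picard_iter G (Suc k) t) \<longlonglongrightarrow> X t" using conv[OF t] by (rule LIMSEQ_Suc)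
    ultimately show ?thesis using dc(1) LIMSEQ_unique by blast
  qed
  have "M-lipschitz_on {0..} (\<lambda>t. integral {0..t} (\<lambda>s. G (X s)))"
    by (rule lipschitz_on_integral_Ici) (use sol G_bounded in auto)
  then have "continuous_on {0..} (\<lambda>t. integral {0..t} (\<lambda>s. G (X s)))"
    by (rule lipschitz_on_continuous_on)
  then have "continuous_on {0..} X" by (rule continuous_on_cong[THEN iffD1, rotated 2]) (use sol in auto)
  moreover have "X 0 = 0" using sol[of 0] by simp
  ultimately show ?thesis using sol by blast
qed

end

lemma continuous_bootstrap:
  fixes \<phi> :: "real \<Rightarrow> real"
  assumes cont: "continuous_on {0..T} \<phi>" and BR: "B < R" and phi0: "\<phi> 0 \<le> B"
    and step: "\<And>t. t \<in> {0..T} \<Longrightarrow> (\<forall>s\<in>{0..t}. \<phi> s \<le> R) \<Longrightarrow> \<phi> t \<le> B"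
    and t: "t \<in> {0..T}"
  shows "\<phi> t \<le> B"
proof (rule ccontr)
  assume "\<not> \<phi> t \<le> B"
  then obtain s1 where s1: "s1 \<in> {0..t}" "R < \<phi> s1" using step[OF t] by force
  define A where "A = {0..T} \<inter> \<phi> -` {R..}"
  have clA: "closed A" unfolding A_def by (rule continuous_closed_preimage[OF cont]) auto
  have s1A: "s1 \<in> A" using s1 t by (auto simp: A_def)
  have bdd: "bdd_below A" unfolding A_def by (auto intro: bdd_belowI[of _ 0])
  define s0 where "s0 = Inf A"
  have s0A: "s0 \<in> A" unfolding s0_def using closed_contains_Inf[OF _ bdd clA] s1A by blast
  have below: "\<phi> s < R" if "s \<in> {0..T}" "s < s0" for s
    using cInf_lower[OF _ bdd, of s] that by (force simp: A_def s0_def)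
  have s0T: "s0 \<in> {0..T}" "R \<le> \<phi> s0" using s0A by (auto simp: A_def)
  obtain s' where s': "0 \<le> s'" "s' \<le> s0" "\<phi> s' = R"
    using IVT'[of \<phi> 0 R s0] phi0 BR s0T continuous_on_subset[OF cont, of "{0..s0}"] by auto
  then have "\<phi> s0 \<le> R" using below[of s'] s0T by force
  then have "\<forall>s\<in>{0..s0}. \<phi> s \<le> R" using below s0T by (metis atLeastAtMost_iff less_eq_real_def order.trans)
  then have "\<phi> s0 \<le> B" using step[OF s0T(1)] by blast
  then show False using s0T BR by simp
qed

section \<open>Linear and topological facts\<close>

lemma norm_le_card_mult_cart:
  fixes x :: "real^'n" and c :: real
  assumes "\<And>j. \<bar>x $ j\<bar> \<le> c"
  shows "norm x \<le> CARD('n) * c"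
proof -
  have "norm x \<le> (\<Sum>j\<in>UNIV. \<bar>x $ j\<bar>)" by (rule norm_le_l1_cart)
  also have "\<dots> \<le> (\<Sum>j\<in>(UNIV::'n set). c)" by (rule sum_mono) (rule assms)
  finally show ?thesis by simp
qed

lemma norm_blinfun_axis_le:
  fixes A :: "(real^'n) \<Rightarrow>\<^sub>L 'a::real_normed_vector"
  shows "norm (blinfun_apply A (axis j 1)) \<le> norm A"
  using norm_blinfun[of A "axis j 1"] by simp

lemma bounded_linear_inner_family:
  fixes b :: "'n::finite \<Rightarrow> 'h::real_inner"
  shows "bounded_linear (\<lambda>h. \<chi> i. b i \<bullet> h)"
proof (rule bounded_linear_intro[where K="CARD('n) * (\<Sum>i\<in>UNIV. norm (b i))"])
  show "(\<chi> i. b i \<bullet> (x + y)) = (\<chi> i. b i \<bullet> x) + (\<chi> i. b i \<bullet> y)" for x y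
    by (simp add: vec_eq_iff inner_add_right)
  show "(\<chi> i. b i \<bullet> (r *\<^sub>R x)) = r *\<^sub>R (\<chi> i. b i \<bullet> x)" for r x by (simp add: vec_eq_iff)
  fix x :: 'h
  have "\<bar>(\<chi> i. b i \<bullet> x) $ i\<bar> \<le> norm x * (\<Sum>i\<in>UNIV. norm (b i))" for i
  proof -
    have "\<bar>(\<chi> i. b i \<bullet> x) $ i\<bar> \<le> norm (b i) * norm x" by (simp add: Cauchy_Schwarz_ineq2)
    also have "\<dots> \<le> (\<Sum>i\<in>UNIV. norm (b i)) * norm x"
      by (intro mult_right_mono member_le_sum) auto
    finally show ?thesis by (simp only: mult.commute)
  qed
  then have "norm (\<chi> i. b i \<bullet> x) \<le> CARD('n) * (norm x * (\<Sum>i\<in>UNIV. norm (b i)))"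
    by (rule norm_le_card_mult_cart)
  then show "norm (\<chi> i. b i \<bullet> x) \<le> norm x * (CARD('n) * (\<Sum>i\<in>UNIV. norm (b i)))"
    by (simp only: ac_simps)
qed

lemma independent_sum_coordinates_eq_0:
  fixes b :: "'n::finite \<Rightarrow> 'h::real_vector"
  assumes b: "bij_betw b UNIV S" and S: "independent S" and sum: "(\<Sum>i\<in>UNIV. y$i *\<^sub>R b i) = 0"
  shows "y = 0"
proof -
  have injb: "inj b" using b bij_betw_def by blast
  define c where "c v = y $ (the_inv_into UNIV b v)" for v
  have "(\<Sum>v\<in>S. c v *\<^sub>R v) = (\<Sum>i\<in>UNIV. c (b i) *\<^sub>R b i)"
    using sum.reindex_bij_betw[OF b, of "\<lambda>v. c v *\<^sub>R v"] by simp
  also have "\<dots> = 0" using sum by (simp add: c_def the_inv_into_f_f[OF injb])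
  finally have "(\<Sum>v\<in>S. c v *\<^sub>R v) = 0" .
  moreover have "finite S" using bij_betw_finite[OF b] by simp
  ultimately have "\<forall>v\<in>S. c v = 0"
    using S unfolding real_vector.independent_explicit_finite_subsets by blast
  moreover have "b i \<in> S" for i using b by (auto simp: bij_betw_def)
  ultimately have "c (b i) = 0" for i by blast
  then show "y = 0" by (simp add: c_def the_inv_into_f_f[OF injb] vec_eq_iff)
qed

text \<open>The Gram matrix of the family \<open>b\<close> is invertible; composing its inverse with
  \<open>h \<mapsto> (b\<^sub>i \<bullet> h)\<^sub>i\<close> gives a bounded left inverse of \<open>y \<mapsto> \<Sum>\<^sub>i y\<^sub>i b\<^sub>i\<close>.\<close>

lemma independent_linear_embedding:
  fixes S :: "'h::real_inner set"
  assumes S: "independent S" "finite S" "card S = CARD('n::finite)"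
  obtains E :: "real^'n \<Rightarrow> 'h" and Q :: "'h \<Rightarrow> real^'n"
  where "linear E" "bounded_linear Q" "\<And>y. Q (E y) = y"
proof -
  obtain b :: "'n \<Rightarrow> 'h" where b: "bij_betw b UNIV S"
    using finite_same_card_bij[of "UNIV::'n set" S] S by auto
  define E :: "real^'n \<Rightarrow> 'h" where "E y = (\<Sum>i\<in>UNIV. y$i *\<^sub>R b i)" for y
  define Q0 :: "'h \<Rightarrow> real^'n" where "Q0 h = (\<chi> i. b i \<bullet> h)" for h
  have linE: "linear E"
    by (rule linearI) (simp_all add: E_def sum.distrib scaleR_add_left scaleR_sum_right)
  have blQ0: "bounded_linear Q0" unfolding Q0_def by (rule bounded_linear_inner_family)
  define A where "A = Q0 \<circ> E"
  have linA: "linear A" unfolding A_def using linE bounded_linear.linear[OF blQ0] by (rule linear_compose)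
  have "inj A"
    unfolding linear_inj_iff_eq_0[OF linA]
  proof (intro allI impI)
    fix y assume "A y = 0"
    moreover have "E y \<bullet> E y = y \<bullet> A y"
      by (simp add: A_def Q0_def E_def inner_vec_def inner_sum_left inner_commute)
    ultimately have "E y = 0" by simp
    then show "y = 0" unfolding E_def by (rule independent_sum_coordinates_eq_0[OF b S(1)])
  qed
  then obtain M where M: "linear M" "M \<circ> A = id" using linear_injective_left_inverse[OF linA] by blast
  show ?thesis
  proof
    show "linear E" by (rule linE)
    show "bounded_linear (M \<circ> Q0)"
      using bounded_linear_compose[OF M(1)[unfolded linear_conv_bounded_linear] blQ0] by (simp add: o_def)
    show "(M \<circ> Q0) (E y) = y" for y using M(2) by (simp add: A_def fun_eq_iff)
  qed
qed

text \<open>A differentiable image of a lower-dimensional space is negligible, hence cannot contain the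
  ball that Brouwer's theorem places inside the image of a near-identity map.\<close>

lemma near_identity_not_into_lowdim_image:
  fixes h :: "'m::euclidean_space \<Rightarrow> 'n::euclidean_space" and g :: "'n \<Rightarrow> 'n"
  assumes dim: "DIM('m) < DIM('n)" and h: "h differentiable_on UNIV" and r: "0 < r"
    and g: "continuous_on (cball 0 r) g" and image: "g ` cball 0 r \<subseteq> range h"
  shows "\<exists>y\<in>cball 0 r. r / 2 \<le> norm (y - g y)"
proof (rule ccontr)
  assume far: "\<not> ?thesis"
  have close: "norm (y - g y) < r / 2" if "y \<in> cball 0 r" for y
    using far that by (simp add: not_le)
  have "ball 0 (r/2) \<subseteq> g ` cball 0 r"
  proof
    fix z :: 'n assume z: "z \<in> ball 0 (r/2)"
    have "\<exists>y\<in>cball 0 r. g y = z"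
    proof (rule brouwer_surjective_cball[OF g r z])
      fix x y :: 'n assume x: "x \<in> ball 0 (r/2)" and y: "y \<in> cball 0 r"
      have "norm (x + (y - g y)) \<le> norm x + norm (y - g y)" by (rule norm_triangle_ineq)
      also have "\<dots> < r/2 + r/2" using x close[OF y] by (intro add_strict_mono) auto
      finally show "x + (y - g y) \<in> cball 0 r" by simp
    qed
    then show "z \<in> g ` cball 0 r" by auto
  qed
  also note image
  finally have "negligible (ball (0::'n) (r/2))"
    by (rule negligible_subset[OF negligible_differentiable_image_lowdim[OF dim h]])
  moreover have "\<not> negligible (ball (0::'n) (r/2))" using r by (intro open_not_negligible) auto
  ultimately show False by blast
qed

section \<open>Gradient flow of a model with Lipschitz differential\<close>

lemma gf_loss_le_of_dist:
  assumes "dist f f0 \<le> \<rho>"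
  shows "gf_loss Phi f w \<le> (norm (f0 - Phi w) + \<rho>) ^ 2 / 2"
proof -
  have "norm (f - Phi w) \<le> norm (f0 - Phi w) + norm (f - f0)"
    using norm_triangle_ineq[of "f0 - Phi w" "f - f0"] by simp
  also have "\<dots> \<le> norm (f0 - Phi w) + \<rho>" using assms by (simp add: dist_norm)
  finally show ?thesis by (simp add: gf_loss_def power_mono)
qed

lemma norm_residual_lt_of_gf_loss_lt:
  assumes "gf_loss Phi f w < a ^ 2 / 2" "0 \<le> a"
  shows "norm (f - Phi w) < a"
  using assms by (simp add: gf_loss_def power2_less_imp_less)

locale gradient_flow_model =
  fixes Phi :: "real^'w \<Rightarrow> 'h::real_inner"
    and Phi' :: "real^'w \<Rightarrow> ((real^'w) \<Rightarrow>\<^sub>L 'h)"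
    and L :: real
  assumes has_derivative_Phi: "\<And>x. (Phi has_derivative blinfun_apply (Phi' x)) (at x)"
    and lipschitz_Phi': "L-lipschitz_on UNIV Phi'"
begin

definition neg_grad :: "'h \<Rightarrow> real^'w \<Rightarrow> real^'w" where
  "neg_grad f w = (\<chi> j. blinfun_apply (Phi' w) (axis j 1) \<bullet> (f - Phi w))"

lemma L_nonneg: "0 \<le> L"
  using lipschitz_Phi' lipschitz_on_nonneg by blast

lemma norm_Phi'_diff_le: "norm (Phi' x - Phi' y) \<le> L * norm (x - y)"
  using lipschitz_onD[OF lipschitz_Phi', of x y] by (simp add: dist_norm)

lemma continuous_on_Phi: "continuous_on S Phi"
  using has_derivative_Phi has_derivative_continuous continuous_at_imp_continuous_on by blast

lemma has_derivative_gf_loss: "(gf_loss Phi f has_derivative (\<lambda>v. (- neg_grad f w) \<bullet> v)) (at w)"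
proof -
  have loss: "gf_loss Phi f = (\<lambda>w. (1/2) * ((f - Phi w) \<bullet> (f - Phi w)))"
    by (auto simp: gf_loss_def power2_norm_eq_inner fun_eq_iff)
  have "(1/2) * ((f - Phi w) \<bullet> (- Phi' w v) + (- Phi' w v) \<bullet> (f - Phi w)) = (- neg_grad f w) \<bullet> v" for v
  proof -
    have "Phi' w v = (\<Sum>j\<in>UNIV. v$j *\<^sub>R Phi' w (axis j 1))"
      by (subst basis_expansion[of v, symmetric])
        (simp add: blinfun.sum_right blinfun.scaleR_right scalar_mult_eq_scaleR)
    then show ?thesis
      by (simp add: neg_grad_def inner_vec_def inner_commute inner_sum_left inner_sum_right sum_negf mult.commute)
  qed
  moreover have "((\<lambda>w. (1/2) * ((f - Phi w) \<bullet> (f - Phi w))) has_derivative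
      (\<lambda>v. (1/2) * ((f - Phi w) \<bullet> (- Phi' w v) + (- Phi' w v) \<bullet> (f - Phi w)))) (at w)"
    by (auto intro!: derivative_eq_intros has_derivative_Phi)
  ultimately show ?thesis unfolding loss by simp
qed

definition deriv_bound :: "real \<Rightarrow> real" where
  "deriv_bound R = norm (Phi' 0) + L * R"

definition residual_bound :: "'h \<Rightarrow> real \<Rightarrow> real" where
  "residual_bound f R = norm f + norm (Phi 0) + deriv_bound R * R"

lemma deriv_bound_nonneg: "0 \<le> R \<Longrightarrow> 0 \<le> deriv_bound R"
  using L_nonneg by (simp add: deriv_bound_def)

lemma residual_bound_nonneg: "0 \<le> R \<Longrightarrow> 0 \<le> residual_bound f R"
  using deriv_bound_nonneg[of R] by (simp add: residual_bound_def)

lemma norm_Phi'_le: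
  assumes "norm x \<le> R"
  shows "norm (Phi' x) \<le> deriv_bound R"
proof -
  have "norm (Phi' x) \<le> norm (Phi' 0) + norm (Phi' x - Phi' 0)" by (rule norm_triangle_sub)
  also have "norm (Phi' x - Phi' 0) \<le> L * R"
    using norm_Phi'_diff_le[of x 0] mult_left_mono[OF assms L_nonneg] by simp
  finally show ?thesis by (simp add: deriv_bound_def)
qed

lemma norm_Phi_diff_le:
  assumes "norm x \<le> R" "norm y \<le> R"
  shows "norm (Phi x - Phi y) \<le> deriv_bound R * norm (x - y)"
proof (rule differentiable_bound[where S="cball 0 R" and f'="\<lambda>x. blinfun_apply (Phi' x)"])
  show "(Phi has_derivative blinfun_apply (Phi' x)) (at x within cball 0 R)" for x
    using has_derivative_Phi has_derivative_at_withinI by blast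
  show "onorm (blinfun_apply (Phi' x)) \<le> deriv_bound R" if "x \<in> cball 0 R" for x
    using norm_Phi'_le[of x R] that by (simp add: norm_blinfun.rep_eq)
qed (use assms in auto)

lemma norm_residual_le:
  assumes "norm x \<le> R"
  shows "norm (f - Phi x) \<le> residual_bound f R"
proof -
  have R: "0 \<le> R" using assms norm_ge_zero order_trans by blast
  have "norm (Phi x - Phi 0) \<le> deriv_bound R * norm x"
    using norm_Phi_diff_le[of x R 0] assms R by simp
  also have "\<dots> \<le> deriv_bound R * R" by (rule mult_left_mono[OF assms deriv_bound_nonneg[OF R]])
  finally have "norm (Phi x - Phi 0) \<le> deriv_bound R * R" .
  moreover have "norm (f - Phi x) \<le> norm f + norm (Phi 0) + norm (Phi x - Phi 0)"
    using norm_triangle_ineq4[of f "Phi x"] norm_triangle_sub[of "Phi x" "Phi 0"] by simp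
  ultimately show ?thesis by (simp add: residual_bound_def)
qed

lemma norm_neg_grad_le:
  assumes "norm x \<le> R"
  shows "norm (neg_grad f x) \<le> CARD('w) * (deriv_bound R * residual_bound f R)"
proof (rule norm_le_card_mult_cart)
  fix j
  have "\<bar>neg_grad f x $ j\<bar> \<le> norm (Phi' x (axis j 1)) * norm (f - Phi x)"
    by (simp add: neg_grad_def Cauchy_Schwarz_ineq2)
  also have "\<dots> \<le> deriv_bound R * residual_bound f R"
  proof (rule mult_mono)
    show "norm (Phi' x (axis j 1)) \<le> deriv_bound R"
      using norm_blinfun_axis_le[of "Phi' x" j] norm_Phi'_le[OF assms] by (rule order_trans)
    show "0 \<le> deriv_bound R" using deriv_bound_nonneg assms norm_ge_zero order_trans by blast
  qed (simp_all add: norm_residual_le[OF assms])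
  finally show "\<bar>neg_grad f x $ j\<bar> \<le> deriv_bound R * residual_bound f R" .
qed

lemma neg_grad_lipschitz:
  assumes "norm x \<le> R" "norm y \<le> R"
  shows "norm (neg_grad f x - neg_grad f y)
    \<le> CARD('w) * (L * residual_bound f R + deriv_bound R * deriv_bound R) * norm (x - y)"
proof -
  have R: "0 \<le> R" using assms norm_ge_zero order_trans by blast
  have "\<bar>(neg_grad f x - neg_grad f y) $ j\<bar>
      \<le> (L * residual_bound f R + deriv_bound R * deriv_bound R) * norm (x - y)" for j
  proof -
    define ax where "ax = Phi' x (axis j 1)"
    define ay where "ay = Phi' y (axis j 1)"
    have ax_ay: "norm (ax - ay) \<le> L * norm (x - y)"
      using norm_blinfun_axis_le[of "Phi' x - Phi' y" j] norm_Phi'_diff_le[of x y]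
      by (simp add: ax_def ay_def blinfun.diff_left)
    have ay: "norm ay \<le> deriv_bound R"
      using norm_blinfun_axis_le[of "Phi' y" j] norm_Phi'_le[OF assms(2)] by (simp add: ay_def)
    have Phi_xy: "norm (Phi y - Phi x) \<le> deriv_bound R * norm (x - y)"
      using norm_Phi_diff_le[OF assms(2,1)] by (simp add: norm_minus_commute)
    have "(neg_grad f x - neg_grad f y) $ j = (ax - ay) \<bullet> (f - Phi x) + ay \<bullet> (Phi y - Phi x)"
      unfolding neg_grad_def ax_def ay_def by (simp add: inner_diff_left inner_diff_right)
    then have "\<bar>(neg_grad f x - neg_grad f y) $ j\<bar> \<le> \<bar>(ax - ay) \<bullet> (f - Phi x)\<bar> + \<bar>ay \<bullet> (Phi y - Phi x)\<bar>"
      by (simp only: abs_triangle_ineq)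
    also have "\<dots> \<le> norm (ax - ay) * norm (f - Phi x) + norm ay * norm (Phi y - Phi x)"
      by (intro add_mono Cauchy_Schwarz_ineq2)
    also have "\<dots> \<le> (L * norm (x - y)) * residual_bound f R + deriv_bound R * (deriv_bound R * norm (x - y))"
      using norm_residual_le[OF assms(1), of f] deriv_bound_nonneg[OF R] L_nonneg ax_ay ay Phi_xy
      by (intro add_mono mult_mono) auto
    finally show ?thesis by (simp add: algebra_simps)
  qed
  from norm_le_card_mult_cart[OF this] show ?thesis by (simp add: mult.assoc)
qed

lemma neg_grad_target_dist:
  assumes "norm x \<le> R"
  shows "norm (neg_grad f x - neg_grad f' x) \<le> CARD('w) * (deriv_bound R * norm (f - f'))"
proof (rule norm_le_card_mult_cart)
  fix j
  have "(neg_grad f x - neg_grad f' x) $ j = Phi' x (axis j 1) \<bullet> (f - f')"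
    by (simp add: neg_grad_def inner_diff_right)
  then have "\<bar>(neg_grad f x - neg_grad f' x) $ j\<bar> \<le> norm (Phi' x (axis j 1)) * norm (f - f')"
    by (simp add: Cauchy_Schwarz_ineq2)
  also have "\<dots> \<le> deriv_bound R * norm (f - f')"
    using norm_blinfun_axis_le[of "Phi' x" j] norm_Phi'_le[OF assms]
    by (intro mult_right_mono) auto
  finally show "\<bar>(neg_grad f x - neg_grad f' x) $ j\<bar> \<le> deriv_bound R * norm (f - f')" .
qed

text \<open>Freezing the field outside \<open>cball 0 R\<close> makes it globally Lipschitz and bounded, so that
  Picard iteration applies; the a priori bound \<open>norm_clamped_flow_le\<close> shows that for a suitable
  \<open>R\<close> the clamp is never active.\<close>

definition clamp :: "real \<Rightarrow> real^'w \<Rightarrow> real^'w" where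
  "clamp R x = closest_point (cball 0 R) x"

definition clamped_field :: "real \<Rightarrow> 'h \<Rightarrow> real^'w \<Rightarrow> real^'w" where
  "clamped_field R f x = neg_grad f (clamp R x)"

definition field_lipschitz :: "real \<Rightarrow> 'h \<Rightarrow> real" where
  "field_lipschitz R f = CARD('w) * (L * residual_bound f R + deriv_bound R * deriv_bound R)"

lemma norm_clamp_le: "0 \<le> R \<Longrightarrow> norm (clamp R x) \<le> R"
  unfolding clamp_def using closest_point_in_set[of "cball (0::real^'w) R" x] by auto

lemma clamp_id: "norm x \<le> R \<Longrightarrow> clamp R x = x"
  unfolding clamp_def by (rule closest_point_self) simp

lemma field_lipschitz_nonneg: "0 \<le> R \<Longrightarrow> 0 \<le> field_lipschitz R f"
  unfolding field_lipschitz_def using L_nonneg residual_bound_nonneg[of R f] deriv_bound_nonneg[of R] by simp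

lemma clamped_field_lipschitz:
  assumes "0 \<le> R"
  shows "norm (clamped_field R f x - clamped_field R f y) \<le> field_lipschitz R f * norm (x - y)"
proof -
  have "norm (clamped_field R f x - clamped_field R f y) \<le> field_lipschitz R f * norm (clamp R x - clamp R y)"
    unfolding clamped_field_def field_lipschitz_def
    using neg_grad_lipschitz[OF norm_clamp_le[OF assms] norm_clamp_le[OF assms]] by simp
  also have "\<dots> \<le> field_lipschitz R f * norm (x - y)"
    using closest_point_lipschitz[of "cball (0::real^'w) R" x y] field_lipschitz_nonneg[OF assms] assms
    by (intro mult_left_mono) (auto simp: clamp_def dist_norm)
  finally show ?thesis .
qed

lemma norm_clamped_field_le:
  "0 \<le> R \<Longrightarrow> norm (clamped_field R f x) \<le> CARD('w) * (deriv_bound R * residual_bound f R)"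
  unfolding clamped_field_def by (rule norm_neg_grad_le[OF norm_clamp_le])

lemma clamped_field_target_dist:
  "0 \<le> R \<Longrightarrow> norm (clamped_field R f x - clamped_field R f' x) \<le> CARD('w) * (deriv_bound R * norm (f - f'))"
  unfolding clamped_field_def by (rule neg_grad_target_dist[OF norm_clamp_le])

lemma continuous_on_clamped_field: "0 \<le> R \<Longrightarrow> continuous_on UNIV (clamped_field R f)"
  by (rule continuous_on_norm_lipschitz[OF clamped_field_lipschitz field_lipschitz_nonneg])

definition clamped_flow :: "real \<Rightarrow> 'h \<Rightarrow> real \<Rightarrow> real^'w" where
  "clamped_flow R f = (SOME X. X 0 = 0 \<and> continuous_on {0..} X \<and>
     (\<forall>t\<ge>0. X t = integral {0..t} (\<lambda>s. clamped_field R f (X s))))"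

lemma clamped_flow:
  assumes "0 \<le> R"
  shows "clamped_flow R f 0 = 0" and "continuous_on {0..} (clamped_flow R f)"
    and "\<And>t. 0 \<le> t \<Longrightarrow> clamped_flow R f t = integral {0..t} (\<lambda>s. clamped_field R f (clamped_flow R f s))"
  using someI_ex[OF integral_equation_solution_exists[OF clamped_field_lipschitz[OF assms]
        field_lipschitz_nonneg[OF assms] norm_clamped_field_le[OF assms]]]
  unfolding clamped_flow_def[symmetric] by blast+

lemma has_vector_derivative_clamped_flow:
  assumes R: "0 \<le> R" and t: "0 \<le> t"
  shows "(clamped_flow R f has_vector_derivative clamped_field R f (clamped_flow R f t)) (at t within {0..})"
proof (rule has_vector_derivative_transform_within[OF integral_has_vector_derivative_Ici zero_less_one])
  show "continuous_on {0..} (\<lambda>s. clamped_field R f (clamped_flow R f s))"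
    by (rule continuous_on_compose2[OF continuous_on_clamped_field[OF R] clamped_flow(2)[OF R]]) auto
  show "integral {0..t'} (\<lambda>s. clamped_field R f (clamped_flow R f s)) = clamped_flow R f t'"
    if "t' \<in> {0..}" for t'
    using clamped_flow(3)[OF R] that by simp
qed (use t in auto)

lemma continuous_on_gf_loss: "continuous_on S (gf_loss Phi f)"
  unfolding gf_loss_def[abs_def] by (intro continuous_intros continuous_on_Phi)

lemma gf_loss_nonneg: "0 \<le> gf_loss Phi f w"
  by (simp add: gf_loss_def)

lemma has_real_derivative_gf_loss_clamped_flow:
  assumes R: "0 \<le> R" and s: "0 < s" and inside: "norm (clamped_flow R f s) \<le> R"
  shows "(clamped_flow R f has_vector_derivative neg_grad f (clamped_flow R f s)) (at s)"
    and "((\<lambda>u. gf_loss Phi f (clamped_flow R f u)) has_real_derivative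
           - (norm (neg_grad f (clamped_flow R f s)))\<^sup>2) (at s)"
proof -
  have "s \<in> interior {0..}" using s by simp
  then have "at s within {0..} = at s" by (rule at_within_interior)
  then show d: "(clamped_flow R f has_vector_derivative neg_grad f (clamped_flow R f s)) (at s)"
    using has_vector_derivative_clamped_flow[OF R less_imp_le[OF s], of f]
    by (simp add: clamped_field_def clamp_id[OF inside])
  show "((\<lambda>u. gf_loss Phi f (clamped_flow R f u)) has_real_derivative
           - (norm (neg_grad f (clamped_flow R f s)))\<^sup>2) (at s)"
    unfolding has_field_derivative_def
  proof (rule has_derivative_eq_rhs)
    show "((\<lambda>u. gf_loss Phi f (clamped_flow R f u)) has_derivative
        (\<lambda>h. (- neg_grad f (clamped_flow R f s)) \<bullet> (h *\<^sub>R neg_grad f (clamped_flow R f s)))) (at s)"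
      using has_derivative_compose[OF d[unfolded has_vector_derivative_def] has_derivative_gf_loss[of f]] by simp
  qed (simp add: fun_eq_iff power2_norm_eq_inner)
qed

text \<open>The a priori bound: while the clamp is inactive,
  \<open>\<parallel>w'\<parallel> = \<parallel>\<nabla>L\<^sub>f\<parallel> \<le> 1/2 + \<parallel>\<nabla>L\<^sub>f\<parallel>\<^sup>2/2 = (t/2 - L\<^sub>f(w(t))/2)'\<close>, so
  \<open>\<parallel>w(t)\<parallel> \<le> t/2 + L\<^sub>f(0)/2\<close>; by continuity the clamp then never becomes active.\<close>

lemma norm_clamped_flow_le:
  assumes BR: "T/2 + gf_loss Phi f 0 / 2 < R" and t: "t \<in> {0..T}"
  shows "norm (clamped_flow R f t) \<le> T/2 + gf_loss Phi f 0 / 2"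
proof -
  define B where "B = T/2 + gf_loss Phi f 0 / 2"
  define X where "X = clamped_flow R f"
  have B0: "0 \<le> B" using t gf_loss_nonneg[of f 0] by (simp add: B_def)
  have R: "0 \<le> R" using BR B0 B_def by linarith
  have X0: "X 0 = 0" using clamped_flow(1)[OF R] by (simp add: X_def)
  have cX: "continuous_on {0..T} X"
    unfolding X_def by (rule continuous_on_subset[OF clamped_flow(2)[OF R]]) auto
  show ?thesis unfolding B_def[symmetric] X_def[symmetric]
  proof (rule continuous_bootstrap[where \<phi>="\<lambda>t. norm (X t)" and R=R, OF _ _ _ _ t])
    show "continuous_on {0..T} (\<lambda>t. norm (X t))" by (intro continuous_intros cX)
    show "B < R" "norm (X 0) \<le> B" using BR X0 B0 by (simp_all add: B_def)
    fix t assume t: "t \<in> {0..T}" and inside: "\<forall>s\<in>{0..t}. norm (X s) \<le> R"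
    define q where "q u = u/2 - gf_loss Phi f (X u) / 2" for u
    have "norm (X t - X 0) \<le> q t - q 0" if t_pos: "0 < t"
    proof (rule differentiable_bound_general[OF t_pos])
      show cXt: "continuous_on {0..t} X" using cX t by (auto intro: continuous_on_subset)
      show "continuous_on {0..t} q"
        unfolding q_def by (intro continuous_intros continuous_on_compose2[OF continuous_on_gf_loss cXt]) auto
      fix s assume s: "0 < s" "s < t"
      have s_inside: "norm (clamped_flow R f s) \<le> R" using inside s by (auto simp: X_def)
      show "(X has_vector_derivative neg_grad f (X s)) (at s)"
        using has_real_derivative_gf_loss_clamped_flow(1)[OF R s(1) s_inside] by (simp add: X_def)
      have "(q has_real_derivative 1/2 + (norm (neg_grad f (X s)))\<^sup>2 / 2) (at s)"
        unfolding q_def using has_real_derivative_gf_loss_clamped_flow(2)[OF R s(1) s_inside]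
        by (auto intro!: derivative_eq_intros simp: X_def)
      then show "(q has_vector_derivative 1/2 + (norm (neg_grad f (X s)))\<^sup>2 / 2) (at s)"
        by (simp add: has_real_derivative_iff_has_vector_derivative)
      have "0 \<le> (norm (neg_grad f (X s)) - 1)\<^sup>2" by simp
      then show "norm (neg_grad f (X s)) \<le> 1/2 + (norm (neg_grad f (X s)))\<^sup>2 / 2"
        by (simp add: power2_eq_square algebra_simps)
    qed
    moreover have "q t - q 0 \<le> B" unfolding q_def B_def using X0 t gf_loss_nonneg[of f "X t"] by simp
    ultimately show "norm (X t) \<le> B" using X0 B0 t by (cases "t = 0") auto
  qed
qed

lemma clamped_flow_eq:
  assumes R1: "T/2 + gf_loss Phi f 0 / 2 < R1" and R2: "T/2 + gf_loss Phi f 0 / 2 < R2"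
    and t: "t \<in> {0..T}"
  shows "clamped_flow R1 f t = clamped_flow R2 f t"
proof -
  have "0 \<le> T/2 + gf_loss Phi f 0 / 2" using t gf_loss_nonneg[of f 0] by auto
  then have R1': "0 \<le> R1" and R2': "0 \<le> R2" using R1 R2 by linarith+
  have "norm (clamped_flow R1 f t - clamped_flow R2 f t) \<le> 0 * T * exp (field_lipschitz R2 f * t)"
  proof (rule integral_equation_solutions_dist[OF _ _ continuous_on_clamped_field[OF R2']
        continuous_on_clamped_field[OF R2'] _ _ clamped_field_lipschitz[OF R2']
        field_lipschitz_nonneg[OF R2'] _ t])
    show "continuous_on {0..T} (clamped_flow R1 f)" "continuous_on {0..T} (clamped_flow R2 f)"
      by (rule continuous_on_subset[OF clamped_flow(2)], use R1' R2' in auto)+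
    fix s assume s: "s \<in> {0..T}"
    show "clamped_flow R2 f s = integral {0..s} (\<lambda>u. clamped_field R2 f (clamped_flow R2 f u))"
      using clamped_flow(3)[OF R2'] s by auto
    have "clamped_field R1 f (clamped_flow R1 f u) = clamped_field R2 f (clamped_flow R1 f u)"
      if "u \<in> {0..s}" for u
      using norm_clamped_flow_le[OF R1, of u] that s R1 R2 by (simp add: clamped_field_def clamp_id)
    then show "clamped_flow R1 f s = integral {0..s} (\<lambda>u. clamped_field R2 f (clamped_flow R1 f u))"
      using clamped_flow(3)[OF R1'] s by (auto intro: integral_cong)
  qed (use R1' R2' in auto)
  then show ?thesis by simp
qed

definition flow :: "'h \<Rightarrow> real \<Rightarrow> real^'w" where
  "flow f t = clamped_flow (t/2 + gf_loss Phi f 0 / 2 + 1) f t"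

lemma flow_eq_clamped_flow:
  assumes "T/2 + gf_loss Phi f 0 / 2 < R" "t \<in> {0..T}"
  shows "flow f t = clamped_flow R f t"
  unfolding flow_def using assms by (intro clamped_flow_eq[where T=t]) auto

lemma gf_solution_flow: "gf_solution Phi f (flow f)"
  unfolding gf_solution_def
proof (intro conjI allI impI)
  show "flow f 0 = 0" unfolding flow_def using clamped_flow(1) gf_loss_nonneg[of f 0] by simp
  fix t :: real assume t: "0 \<le> t"
  define R where "R = (t+1)/2 + gf_loss Phi f 0 / 2 + 1"
  have R: "0 \<le> R" using gf_loss_nonneg[of f 0] t by (simp add: R_def)
  have flow_eq: "flow f u = clamped_flow R f u" if "u \<in> {0..t+1}" for u
    using flow_eq_clamped_flow[of "t+1" f R u] that by (simp add: R_def)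
  have "norm (clamped_flow R f t) \<le> R" using norm_clamped_flow_le[of "t+1" f R t] t by (simp add: R_def)
  then have "(clamped_flow R f has_vector_derivative neg_grad f (flow f t)) (at t within {0..})"
    using has_vector_derivative_clamped_flow[OF R t, of f] flow_eq[of t] t
    by (simp add: clamped_field_def clamp_id)
  then have "(flow f has_vector_derivative neg_grad f (flow f t)) (at t within {0..})"
    by (rule has_vector_derivative_transform_within[OF _ zero_less_one])
      (use t flow_eq in \<open>auto simp: dist_real_def\<close>)
  then have "(flow f has_vector_derivative - (- neg_grad f (flow f t))) (at t within {0..})"
    by simp
  with has_derivative_gf_loss show "\<exists>g. (gf_loss Phi f has_derivative (\<bullet>) g) (at (flow f t)) \<and>
      (flow f has_vector_derivative - g) (at t within {0..})" by blast
qed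

lemma gf_loss_flow_antimono:
  assumes t1: "0 \<le> t1" and t12: "t1 \<le> t2"
  shows "gf_loss Phi f (flow f t2) \<le> gf_loss Phi f (flow f t1)"
proof -
  define R where "R = t2/2 + gf_loss Phi f 0 / 2 + 1"
  have R: "0 \<le> R" using gf_loss_nonneg[of f 0] t1 t12 by (simp add: R_def)
  have flow_eq: "flow f u = clamped_flow R f u" if "u \<in> {0..t2}" for u
    using flow_eq_clamped_flow[of t2 f R u] that by (simp add: R_def)
  have "gf_loss Phi f (clamped_flow R f t2) \<le> gf_loss Phi f (clamped_flow R f t1)"
  proof (rule DERIV_nonpos_imp_decreasing_open[OF t12])
    show "continuous_on {t1..t2} (\<lambda>u. gf_loss Phi f (clamped_flow R f u))"
      by (rule continuous_on_compose2[OF continuous_on_gf_loss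
            continuous_on_subset[OF clamped_flow(2)[OF R]]]) (use t1 in auto)
    fix s assume s: "t1 < s" "s < t2"
    have "norm (clamped_flow R f s) \<le> R" using norm_clamped_flow_le[of t2 f R s] s t1 by (simp add: R_def)
    then have "((\<lambda>u. gf_loss Phi f (clamped_flow R f u)) has_real_derivative
        - (norm (neg_grad f (clamped_flow R f s)))\<^sup>2) (at s)"
      using has_real_derivative_gf_loss_clamped_flow(2)[OF R] s t1 by simp
    then show "\<exists>y. ((\<lambda>u. gf_loss Phi f (clamped_flow R f u)) has_real_derivative y) (at s) \<and> y \<le> 0"
      by (auto intro!: exI)
  qed
  then show ?thesis using flow_eq[of t1] flow_eq[of t2] t1 t12 by simp
qed

lemma clamped_flow_target_dist:
  assumes R: "0 \<le> R" and T: "0 \<le> T"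
  shows "norm (clamped_flow R f T - clamped_flow R f' T)
    \<le> CARD('w) * deriv_bound R * T * exp (field_lipschitz R f * T) * norm (f - f')"
proof -
  have "norm (clamped_flow R f T - clamped_flow R f' T)
      \<le> (CARD('w) * (deriv_bound R * norm (f - f'))) * T * exp (field_lipschitz R f * T)"
  proof (rule integral_equation_solutions_dist[OF _ _ continuous_on_clamped_field[OF R]
        continuous_on_clamped_field[OF R] _ _ clamped_field_lipschitz[OF R]
        field_lipschitz_nonneg[OF R] clamped_field_target_dist[OF R]])
    show "continuous_on {0..T} (clamped_flow R f)" "continuous_on {0..T} (clamped_flow R f')"
      by (rule continuous_on_subset[OF clamped_flow(2)[OF R]], auto)+
    show "clamped_flow R f t = integral {0..t} (\<lambda>s. clamped_field R f (clamped_flow R f s))"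
      "clamped_flow R f' t = integral {0..t} (\<lambda>s. clamped_field R f' (clamped_flow R f' s))"
      if "t \<in> {0..T}" for t
      using clamped_flow(3)[OF R] that by auto
  qed (use T in auto)
  then show ?thesis by (simp add: algebra_simps)
qed

lemma continuous_on_clamped_flow_target:
  assumes R: "0 \<le> R" and T: "0 \<le> T"
  shows "continuous_on UNIV (\<lambda>f. clamped_flow R f T)"
proof -
  have "isCont (\<lambda>f. clamped_flow R f T) f" for f
  proof -
    define C where "C = CARD('w) * deriv_bound R * T * exp (field_lipschitz R f * T)"
    have "((\<lambda>f'. clamped_flow R f' T - clamped_flow R f T) \<longlongrightarrow> 0) (at f)"
    proof (rule Lim_null_comparison)
      have "norm (clamped_flow R f' T - clamped_flow R f T) \<le> C * norm (f - f')" for f'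
        using clamped_flow_target_dist[OF R T, of f f'] unfolding C_def
        by (simp only: norm_minus_commute[of "clamped_flow R f' T"])
      then show "\<forall>\<^sub>F f' in at f. norm (clamped_flow R f' T - clamped_flow R f T) \<le> C * norm (f - f')"
        by (simp add: always_eventually)
      show "((\<lambda>f'. C * norm (f - f')) \<longlongrightarrow> 0) (at f)"
      proof (intro tendsto_mult_right_zero tendsto_norm_zero)
        have "((\<lambda>f'. f - f') \<longlongrightarrow> f - f) (at f)" by (intro tendsto_intros)
        then show "((\<lambda>f'. f - f') \<longlongrightarrow> 0) (at f)" by simp
      qed
    qed
    then show ?thesis unfolding isCont_def by (rule LIM_zero_cancel)
  qed
  then show ?thesis by (simp add: continuous_at_imp_continuous_on)
qed

text \<open>Near a fixed target the initial loss is bounded, so one clamping radius serves for all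
  nearby targets up to time \<open>T\<close>.\<close>

lemma continuous_on_flow_target:
  assumes T: "0 \<le> T"
  shows "continuous_on UNIV (\<lambda>f. flow f T)"
proof -
  have "isCont (\<lambda>f. flow f T) f0" for f0
  proof -
    define R where "R = T/2 + (norm (f0 - Phi 0) + 1)\<^sup>2 / 4 + 1"
    have R: "0 \<le> R" using T by (simp add: R_def)
    have eq: "clamped_flow R f T = flow f T" if "dist f f0 < 1" for f
    proof -
      have "gf_loss Phi f 0 \<le> (norm (f0 - Phi 0) + 1)\<^sup>2 / 2"
        using gf_loss_le_of_dist[of f f0 1] that by simp
      then have "T/2 + gf_loss Phi f 0 / 2 < R" by (simp add: R_def)
      then show ?thesis using flow_eq_clamped_flow[of T f R T] T by simp
    qed
    have "isCont (\<lambda>f. clamped_flow R f T) f0"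
      using continuous_on_clamped_flow_target[OF R T] by (simp add: continuous_on_eq_continuous_at)
    then show ?thesis by (rule continuous_transform_within[OF _ zero_less_one UNIV_I]) (rule eq)
  qed
  then show ?thesis by (simp add: continuous_at_imp_continuous_on)
qed

lemma gf_learnable_flow_loss_lt:
  assumes "f \<in> gf_learnable Phi" "0 < \<delta>"
  obtains n :: nat where "gf_loss Phi f (flow f n) < \<delta>"
proof -
  have "(INF t\<in>{0..}. gf_loss Phi f (flow f t)) = 0"
    using assms(1) gf_solution_flow[of f] unfolding gf_learnable_def by blast
  then have "Inf ((\<lambda>t. gf_loss Phi f (flow f t)) ` {0..}) < \<delta>" using assms(2) by simp
  from cInf_lessD[OF _ this] obtain t where t: "0 \<le> t" "gf_loss Phi f (flow f t) < \<delta>" by auto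
  have "gf_loss Phi f (flow f (nat \<lceil>t\<rceil>)) \<le> gf_loss Phi f (flow f t)"
    using t by (intro gf_loss_flow_antimono) (auto simp: real_nat_ceiling_ge)
  with t show ?thesis by (intro that[of "nat \<lceil>t\<rceil>"]) linarith
qed

lemma compact_gf_learnable_uniform_time:
  assumes C: "compact C" "C \<subseteq> gf_learnable Phi" and \<delta>: "0 < \<delta>"
  obtains T where "0 \<le> T" "\<And>f. f \<in> C \<Longrightarrow> gf_loss Phi f (flow f T) < \<delta>"
proof -
  define V where "V n = {f. gf_loss Phi f (flow f (real n)) < \<delta>}" for n :: nat
  have "open (V n)" for n
  proof -
    have "continuous_on UNIV (\<lambda>f. Phi (flow f (real n)))"
      by (rule continuous_on_compose2[OF continuous_on_Phi continuous_on_flow_target]) auto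
    then show ?thesis
      unfolding V_def gf_loss_def by (intro open_Collect_less continuous_intros) auto
  qed
  moreover have "C \<subseteq> (\<Union>n. V n)"
  proof
    fix f assume "f \<in> C"
    then obtain n where "gf_loss Phi f (flow f (real n)) < \<delta>"
      using gf_learnable_flow_loss_lt[OF _ \<delta>] C(2) by blast
    then show "f \<in> (\<Union>n. V n)" by (auto simp: V_def)
  qed
  ultimately obtain N where N: "finite N" "C \<subseteq> (\<Union>n\<in>N. V n)"
    using compactE_image[OF C(1), of UNIV V] by auto
  show ?thesis
  proof
    show "0 \<le> real (Max (insert 0 N))" by simp
    fix f assume "f \<in> C"
    then obtain n where n: "n \<in> N" "gf_loss Phi f (flow f (real n)) < \<delta>" using N(2) by (auto simp: V_def)
    have "gf_loss Phi f (flow f (Max (insert 0 N))) \<le> gf_loss Phi f (flow f (real n))"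
      using n(1) N(1) by (intro gf_loss_flow_antimono) auto
    with n(2) show "gf_loss Phi f (flow f (Max (insert 0 N))) < \<delta>" by simp
  qed
qed

lemma flow_readout_not_near_identity:
  fixes target :: "real^'w option \<Rightarrow> 'h" and Q :: "'h \<Rightarrow> real^'w option"
  assumes Q: "bounded_linear Q" and target: "continuous_on UNIV target" and T: "0 \<le> T" and r: "0 < r"
  shows "\<exists>y\<in>cball 0 r. r / 2 \<le> norm (y - Q (Phi (flow (target y) T) - f0))"
proof (rule near_identity_not_into_lowdim_image[where h="\<lambda>x. Q (Phi x - f0)", OF _ _ r])
  show "DIM(real^'w) < DIM(real^'w option)" by simp
  have "((\<lambda>x. Q (Phi x - f0)) has_derivative (\<lambda>v. Q (Phi' x v))) (at x)" for x
    using bounded_linear.has_derivative[OF Q has_derivative_diff[OF has_derivative_Phi has_derivative_const]]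
    by simp
  then show "(\<lambda>x. Q (Phi x - f0)) differentiable_on UNIV"
    by (intro differentiable_at_imp_differentiable_on differentiableI)
  have "continuous_on UNIV (\<lambda>y. flow (target y) T)"
    by (rule continuous_on_compose2[OF continuous_on_flow_target[OF T] target]) auto
  then have "continuous_on UNIV (\<lambda>y. Phi (flow (target y) T) - f0)"
    by (intro continuous_intros continuous_on_compose2[OF continuous_on_Phi]) auto
  then have "continuous_on UNIV (\<lambda>y. Q (Phi (flow (target y) T) - f0))"
    by (rule continuous_on_compose2[OF linear_continuous_on[OF Q]]) auto
  then show "continuous_on (cball 0 r) (\<lambda>y. Q (Phi (flow (target y) T) - f0))"
    by (rule continuous_on_subset) auto
qed auto

lemma interior_gf_learnable_empty:
  fixes S :: "'h set"
  assumes S: "independent S" "finite S" "card S = CARD('w) + 1"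
  shows "interior (gf_learnable Phi) = {}"
proof (rule ccontr)
  assume "interior (gf_learnable Phi) \<noteq> {}"
  then obtain f0 where "f0 \<in> interior (gf_learnable Phi)" by blast
  then obtain \<epsilon> where \<epsilon>: "0 < \<epsilon>" and "ball f0 \<epsilon> \<subseteq> interior (gf_learnable Phi)"
    by (rule openE[OF open_interior])
  then have ball: "ball f0 \<epsilon> \<subseteq> gf_learnable Phi" using interior_subset by blast
  obtain E :: "real^'w option \<Rightarrow> 'h" and Q :: "'h \<Rightarrow> real^'w option"
    where E: "linear E" and Q: "bounded_linear Q" and QE: "\<And>y. Q (E y) = y"
    using independent_linear_embedding[OF S(1,2), where 'n="'w option"] S(3) by auto
  obtain Eb where Eb: "0 < Eb" "\<And>y. norm (E y) \<le> Eb * norm y" using linear_bounded_pos[OF E] by blast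
  obtain Qb where Qb: "0 < Qb" "\<And>h. norm (Q h) \<le> norm h * Qb" using bounded_linear.pos_bounded[OF Q] by blast
  define r where "r = \<epsilon> / (2 * Eb)"
  have r: "0 < r" using \<epsilon> Eb by (simp add: r_def)
  define target where "target y = f0 + E y" for y
  have cont_target: "continuous_on UNIV target"
    unfolding target_def using E[unfolded linear_conv_bounded_linear]
    by (intro continuous_intros linear_continuous_on)
  have "target ` cball 0 r \<subseteq> ball f0 \<epsilon>"
  proof
    fix f assume "f \<in> target ` cball 0 r"
    then obtain y where y: "norm y \<le> r" "f = target y" by auto
    have "norm (E y) \<le> Eb * r" using Eb(2)[of y] mult_left_mono[OF y(1), of Eb] Eb(1) by linarith
    then show "f \<in> ball f0 \<epsilon>" using y(2) Eb \<epsilon> by (simp add: target_def dist_norm r_def)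
  qed
  moreover have "compact (target ` cball 0 r)"
    by (rule compact_continuous_image[OF continuous_on_subset[OF cont_target] compact_cball]) simp
  moreover have "0 < (r / (2 * Qb))\<^sup>2 / 2" using r Qb by simp
  ultimately obtain T where T: "0 \<le> T"
    and small: "\<And>f. f \<in> target ` cball 0 r \<Longrightarrow> gf_loss Phi f (flow f T) < (r / (2 * Qb))\<^sup>2 / 2"
    using compact_gf_learnable_uniform_time ball by (metis order_trans)
  define g where "g y = Q (Phi (flow (target y) T) - f0)" for y
  have "\<exists>y\<in>cball 0 r. r / 2 \<le> norm (y - g y)"
    unfolding g_def by (rule flow_readout_not_near_identity[OF Q cont_target T r])
  then obtain y where y: "y \<in> cball 0 r" "r / 2 \<le> norm (y - g y)" by blast
  have "y - g y = Q (E y) - Q (Phi (flow (target y) T) - f0)" by (simp add: QE g_def)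
  also have "\<dots> = Q (target y - Phi (flow (target y) T))"
    by (simp add: linear_diff[OF bounded_linear.linear[OF Q], symmetric] target_def algebra_simps)
  finally have "norm (y - g y) \<le> norm (target y - Phi (flow (target y) T)) * Qb" using Qb(2) by simp
  also have "\<dots> < r / (2 * Qb) * Qb"
    using norm_residual_lt_of_gf_loss_lt[OF small] y(1) r Qb by (intro mult_strict_right_mono) auto
  finally show False using y(2) Qb(1) by simp
qed

end

theorem corollary1:
  fixes Phi :: "real^'w \<Rightarrow> 'h::{real_inner, complete_space}"
    and Phi' :: "real^'w \<Rightarrow> ((real^'w) \<Rightarrow>\<^sub>L 'h)"
  assumes dim: "\<exists>S::'h set. independent S \<and> finite S \<and> card S = CARD('w) + 1"
    and deriv: "\<And>x. (Phi has_derivative blinfun_apply (Phi' x)) (at x)"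
    and lip: "\<exists>L. L-lipschitz_on UNIV Phi'"
  shows "closure (UNIV - gf_learnable Phi) = UNIV"
proof -
  obtain L where "L-lipschitz_on UNIV Phi'" using lip by blast
  then interpret gradient_flow_model Phi Phi' L using deriv by unfold_locales
  have "interior (gf_learnable Phi) = {}" using dim interior_gf_learnable_empty by blast
  then show ?thesis by (simp add: Compl_eq_Diff_UNIV[symmetric] closure_complement)
qed

end
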